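(* Let $\alpha_1,\alpha_2,\beta_1,\beta_2$ be positive constants, and let $\{a_k\}_{k\ge0}$, $\{b_k\}_{k\ge1}$ be non-negative sequences with $a_{k+1}\le\alpha_1a_k^2+\alpha_2$ for all $k\ge0$ and $b_{k+1}\le\beta_1b_k+\beta_2b_k^2$ for all $k\ge1$. Assume $\alpha_2\le\frac1{4\alpha_1}$ and $\beta_1<1$. If $a_0=0$ and $b_1\le\frac{\gamma-\beta_1}{\beta_2}$ for some $\gamma\in(\beta_1,1)$, then \[ 0\le\sup_{k\ge0}a_k\le2\alpha_2,\qquad \sum_{k=1}^\infty b_k\le\frac{b_1}{1-\gamma}. \] *)

theory Defs
  imports "HOL-Analysis.Analysis"
begin

end

theory Submission
  imports Defs
begin

text \<open>Both bounds come from invariant intervals. Since \<open>4 \<alpha>1 \<alpha>2 \<le> 1\<close>, the map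
  \<open>x \<mapsto> \<alpha>1 x\<^sup>2 + \<alpha>2\<close> sends \<open>[0, 2 \<alpha>2]\<close> into itself, so \<open>a\<close> never leaves it.
  For \<open>b\<close>, the recursion gives \<open>b (k + 1) \<le> (\<beta>1 + \<beta>2 b k) b k\<close>; as long as \<open>b k \<le> b 1\<close>
  the factor is at most \<open>\<gamma>\<close>, so \<open>b\<close> decays at least geometrically with ratio \<open>\<gamma>\<close>
  and is dominated by a geometric series.\<close>

lemma quadratic_recurrence_bounded:
  fixes x :: "nat \<Rightarrow> real" and c d :: real
  assumes "c \<ge> 0" "d \<ge> 0" "4 * c * d \<le> 1"
    and nonneg: "\<And>k. x k \<ge> 0"
    and step: "\<And>k. x (Suc k) \<le> c * (x k)\<^sup>2 + d"
    and start: "x 0 \<le> 2 * d"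
  shows "x k \<le> 2 * d"
proof (induction k)
  case 0
  show ?case using start .
next
  case (Suc k)
  have "c * (x k)\<^sup>2 \<le> c * (2 * d)\<^sup>2"
    using Suc nonneg[of k] \<open>c \<ge> 0\<close> by (intro mult_left_mono power_mono) auto
  also have "\<dots> = (4 * c * d) * d" by (simp add: power2_eq_square)
  also have "\<dots> \<le> d" using mult_right_mono[OF assms(3,2)] by simp
  finally show ?case using step[of k] by linarith
qed

lemma quadratic_recurrence_geometric_decay:
  fixes x :: "nat \<Rightarrow> real" and c d \<gamma> :: real
  assumes "d \<ge> 0" "0 \<le> \<gamma>" "\<gamma> \<le> 1"
    and nonneg: "\<And>k. x k \<ge> 0"
    and step: "\<And>k. x (Suc k) \<le> c * x k + d * (x k)\<^sup>2"
    and start: "c + d * x 0 \<le> \<gamma>"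
  shows "x k \<le> \<gamma> ^ k * x 0"
proof (induction k)
  case 0
  show ?case by simp
next
  case (Suc k)
  have "\<gamma> ^ k * x 0 \<le> x 0"
    using nonneg[of 0] assms(2,3) by (simp add: mult_left_le_one_le power_le_one)
  with Suc have "x k \<le> x 0" by linarith
  then have factor: "c + d * x k \<le> \<gamma>"
    using start \<open>d \<ge> 0\<close> mult_left_mono[of "x k" "x 0" d] by linarith
  have "x (Suc k) \<le> x k * (c + d * x k)"
    using step[of k] by (simp add: power2_eq_square algebra_simps)
  also have "\<dots> \<le> x k * \<gamma>" using factor nonneg[of k] by (rule mult_left_mono)
  also have "\<dots> \<le> \<gamma> ^ k * x 0 * \<gamma>" using Suc \<open>0 \<le> \<gamma>\<close> by (rule mult_right_mono)
  finally show ?case by (simp add: algebra_simps)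
qed

lemma summable_geometric_majorant:
  fixes x :: "nat \<Rightarrow> real" and \<gamma> C :: real
  assumes "0 \<le> \<gamma>" "\<gamma> < 1"
    and nonneg: "\<And>k. x k \<ge> 0"
    and bound: "\<And>k. x k \<le> \<gamma> ^ k * C"
  shows "summable x" and "suminf x \<le> C / (1 - \<gamma>)"
proof -
  have geom: "(\<lambda>k. \<gamma> ^ k * C) sums (C / (1 - \<gamma>))"
    using sums_mult2[OF geometric_sums, of \<gamma> C] assms(1,2) by simp
  show "summable x"
    by (rule summable_comparison_test'[OF sums_summable[OF geom]]) (use nonneg bound in simp)
  then show "suminf x \<le> C / (1 - \<gamma>)"
    using suminf_le[OF bound _ sums_summable[OF geom]] sums_unique[OF geom] by simp
qed

theorem lemma4p2:
  fixes \<alpha>1 \<alpha>2 \<beta>1 \<beta>2 \<gamma> :: real and a b :: "nat \<Rightarrow> real"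
  assumes "\<alpha>1 > 0" "\<alpha>2 > 0" "\<beta>1 > 0" "\<beta>2 > 0"
    and "\<And>k. a k \<ge> 0"
    and "\<And>k. k \<ge> 1 \<Longrightarrow> b k \<ge> 0"
    and "\<And>k. a (Suc k) \<le> \<alpha>1 * (a k)\<^sup>2 + \<alpha>2"
    and "\<And>k. k \<ge> 1 \<Longrightarrow> b (Suc k) \<le> \<beta>1 * b k + \<beta>2 * (b k)\<^sup>2"
    and "\<alpha>2 \<le> 1 / (4 * \<alpha>1)"
    and "\<beta>1 < 1"
    and "a 0 = 0"
    and "\<beta>1 < \<gamma>" "\<gamma> < 1"
    and "b 1 \<le> (\<gamma> - \<beta>1) / \<beta>2"
  shows "bdd_above (range a) \<and> 0 \<le> (SUP k. a k) \<and> (SUP k. a k) \<le> 2 * \<alpha>2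
         \<and> summable (\<lambda>k. b (k + 1)) \<and> (\<Sum>k. b (k + 1)) \<le> b 1 / (1 - \<gamma>)"
proof -
  have "4 * \<alpha>1 * \<alpha>2 \<le> 1" using assms(1,9) by (simp add: field_simps)
  then have a_le: "a k \<le> 2 * \<alpha>2" for k
    using quadratic_recurrence_bounded[of \<alpha>1 \<alpha>2 a] assms(1,2,5,7,11) by simp
  have bdd: "bdd_above (range a)" using a_le by (intro bdd_aboveI[of _ "2 * \<alpha>2"]) auto
  have sup_nonneg: "0 \<le> (SUP k. a k)" using cSUP_upper[OF _ bdd, of 0] assms(5)[of 0] by simp
  have sup_le: "(SUP k. a k) \<le> 2 * \<alpha>2" using a_le by (intro cSUP_least) auto
  have "\<beta>1 + \<beta>2 * b 1 \<le> \<gamma>" using assms(4,14) by (simp add: field_simps)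
  then have "b (k + 1) \<le> \<gamma> ^ k * b 1" for k
    using quadratic_recurrence_geometric_decay[of \<beta>2 \<gamma> "\<lambda>k. b (k + 1)" \<beta>1 k]
      assms(3,4,6,8,12,13) by simp
  then have "summable (\<lambda>k. b (k + 1))" "(\<Sum>k. b (k + 1)) \<le> b 1 / (1 - \<gamma>)"
    using summable_geometric_majorant[of \<gamma> "\<lambda>k. b (k + 1)" "b 1"] assms(3,6,12,13) by simp_all
  with bdd sup_nonneg sup_le show ?thesis by blast
qed

end
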